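(* A choice probability function $q_1:[0,\infty)\to[0,1]$ (depending only on the price $p_1$ of good 1) is QRUM-rationalizable if and only if: (A) $q_1$ is non-increasing; (B) $q_1$ is continuous; and (C) there exist prices $p_L$ and $p_H$ such that $\lim_{p_1\searrow p_L}q_1(p_1)=1$ and $\lim_{p_1\nearrow p_H}q_1(p_1)=0$.
   Context: Two goods: good 0 with price $0$ and good 1 with price $p_1\ge 0$; consumers have common income $y$ (large relative to prices) and spend the remainder on a numeraire. $q_1(p_1)$ is the population probability of choosing good 1. Definition (quasi-linear random utility model, QRUM): $q_1$ is QRUM-rationalizable if there exist a random variable $\eta$ with distribution $H$ and functions $V_0(\eta),V_1(\eta)$ and $\beta(\eta)>0$ (giving utilities $U_0(y,\eta)=V_0(\eta)+\beta(\eta)y$ and $U_1(y-p_1,\eta)=V_1(\eta)+\beta(\eta)(y-p_1)$) such that for all $p_1$, $q_1(p_1)=\int\mathbb{1}\{V_0(\eta)\le V_1(\eta)-\beta(\eta)p_1\}\,dH(\eta)$, and (i) for every $p_1$, $\int\mathbb{1}\{V_0(\eta)=V_1(\eta)-\beta(\eta)p_1\}\,dH(\eta)=0$; (ii) there exist a low price $p_L$ with $\lim_{p_1\searrow p_L}\Pr[V_0(\eta)\le V_1(\eta)-\beta(\eta)p_1]=1$ and a high price $p_H$ with $\lim_{p_1\nearrow p_H}\Pr[V_0(\eta)\le V_1(\eta)-\beta(\eta)p_1]=0$. *)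

theory Defs
  imports "HOL-Probability.Probability"
begin

text \<open>The taste shock eta is a real-valued
random variable with distribution H (a probability measure on the Borel sets of the reals).
Prices of good 1 range over [0, infinity); the numeraire income y cancels from the comparison
V0 + beta*y <= V1 + beta*(y - p1), so the choice event is written directly as
V0 eta <= V1 eta - beta eta * p1.\<close>

definition qrum_prob :: "real measure \<Rightarrow> (real \<Rightarrow> real) \<Rightarrow> (real \<Rightarrow> real) \<Rightarrow> (real \<Rightarrow> real) \<Rightarrow> real \<Rightarrow> real" where
  "qrum_prob H V0 V1 \<beta> p = measure H {\<eta>. V0 \<eta> \<le> V1 \<eta> - \<beta> \<eta> * p}"

definition QRUM_rationalizable :: "(real \<Rightarrow> real) \<Rightarrow> bool" where
  "QRUM_rationalizable q1 \<longleftrightarrow>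
     (\<exists>(H :: real measure) V0 V1 \<beta>.
        prob_space H \<and> sets H = sets borel \<and>
        V0 \<in> borel_measurable borel \<and> V1 \<in> borel_measurable borel \<and> \<beta> \<in> borel_measurable borel \<and>
        (\<forall>\<eta>. \<beta> \<eta> > 0) \<and>
        (\<forall>p \<ge> 0. q1 p = qrum_prob H V0 V1 \<beta> p) \<and>
        (\<forall>p \<ge> 0. measure H {\<eta>. V0 \<eta> = V1 \<eta> - \<beta> \<eta> * p} = 0) \<and>
        (\<exists>pL pH. 0 \<le> pL \<and> 0 < pH \<and>
           (qrum_prob H V0 V1 \<beta> \<longlongrightarrow> 1) (at_right pL) \<and>
           (qrum_prob H V0 V1 \<beta> \<longlongrightarrow> 0) (at_left pH)))"

end

theory Submission
  imports Defs
begin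

text \<open>A consumer buys good 1 at price p exactly when the willingness to pay
  (V1 - V0) / \<beta> is at least p, so the QRUM choice probabilities are the values
  on [0, \<infinity>) of the survival function p \<mapsto> P[X \<ge> p] of a real random variable X,
  and the tie condition says that X has no atoms there. Survival functions are
  non-increasing, and continuous exactly where there are no atoms. Conversely, a
  continuous non-increasing q1 that equals 1 at price 0 and vanishes for large prices
  is the survival function of the distribution with cdf 1 - q1, which is realized
  by V0 = 0, V1 = \<eta>, \<beta> = 1.\<close>

definition willingness_to_pay :: "(real \<Rightarrow> real) \<Rightarrow> (real \<Rightarrow> real) \<Rightarrow> (real \<Rightarrow> real) \<Rightarrow> real \<Rightarrow> real"
  where "willingness_to_pay V0 V1 \<beta> \<eta> = (V1 \<eta> - V0 \<eta>) / \<beta> \<eta>"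

lemma borel_measurable_willingness_to_pay [measurable]:
  assumes [measurable]: "V0 \<in> borel_measurable M" "V1 \<in> borel_measurable M" "\<beta> \<in> borel_measurable M"
  shows "willingness_to_pay V0 V1 \<beta> \<in> borel_measurable M"
  unfolding willingness_to_pay_def by measurable

lemma willingness_to_pay_ge_iff:
  assumes "\<beta> \<eta> > 0"
  shows "p \<le> willingness_to_pay V0 V1 \<beta> \<eta> \<longleftrightarrow> V0 \<eta> \<le> V1 \<eta> - \<beta> \<eta> * p"
  using assms by (simp add: willingness_to_pay_def field_simps)

lemma willingness_to_pay_eq_iff:
  assumes "\<beta> \<eta> > 0"
  shows "p = willingness_to_pay V0 V1 \<beta> \<eta> \<longleftrightarrow> V0 \<eta> = V1 \<eta> - \<beta> \<eta> * p"
  using assms by (auto simp add: willingness_to_pay_def field_simps)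

lemma (in real_distribution) measure_atLeast:
  "measure M {p..} = 1 - cdf M p + measure M {p}"
proof -
  have "measure M {p..} = measure M {p} + measure M {p<..}"
    by (subst finite_measure_Union[symmetric]) (auto intro: arg_cong[where f = "measure M"])
  also have "measure M {p<..} = 1 - cdf M p"
    using prob_compl[of "{..p}"] by (simp add: cdf_def Compl_eq_Diff_UNIV[symmetric])
  finally show ?thesis by simp
qed

lemma (in real_distribution) continuous_on_survival:
  assumes "\<And>p. p \<in> S \<Longrightarrow> measure M {p} = 0"
  shows "continuous_on S (\<lambda>p. measure M {p..})"
proof -
  have "continuous_on S (\<lambda>p. 1 - cdf M p)"
  proof (intro continuous_at_imp_continuous_on ballI)
    fix p assume "p \<in> S"
    then have "isCont (cdf M) p"
      using assms isCont_cdf by blast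
    then show "isCont (\<lambda>p. 1 - cdf M p) p"
      by (intro continuous_intros)
  qed
  then show ?thesis
    by (rule continuous_on_eq) (simp add: measure_atLeast assms)
qed

lemma
  assumes sets_H: "sets H = sets borel"
    and [measurable]: "V0 \<in> borel_measurable borel" "V1 \<in> borel_measurable borel" "\<beta> \<in> borel_measurable borel"
    and \<beta>_pos: "\<forall>\<eta>. \<beta> \<eta> > 0"
  defines "M \<equiv> distr H borel (willingness_to_pay V0 V1 \<beta>)"
  shows qrum_prob_eq_distr_willingness_to_pay: "qrum_prob H V0 V1 \<beta> p = measure M {p..}"
    and measure_ties_eq_distr_willingness_to_pay: "measure H {\<eta>. V0 \<eta> = V1 \<eta> - \<beta> \<eta> * p} = measure M {p}"
proof -
  have space_H: "space H = UNIV"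
    using sets_eq_imp_space_eq[OF sets_H] by simp
  have wtp_measurable: "willingness_to_pay V0 V1 \<beta> \<in> borel_measurable H"
    unfolding measurable_cong_sets[OF sets_H refl] by measurable
  have measure_M: "measure M A = measure H (willingness_to_pay V0 V1 \<beta> -` A)"
    if "A \<in> sets borel" for A
    unfolding M_def using measure_distr[OF wtp_measurable that] space_H by simp
  show "qrum_prob H V0 V1 \<beta> p = measure M {p..}"
    using \<beta>_pos by (simp add: measure_M qrum_prob_def willingness_to_pay_ge_iff vimage_def)
  show "measure H {\<eta>. V0 \<eta> = V1 \<eta> - \<beta> \<eta> * p} = measure M {p}"
    using \<beta>_pos by (simp add: measure_M willingness_to_pay_eq_iff vimage_def eq_commute[of _ p])
qed

definition full_and_null_demand_limits :: "(real \<Rightarrow> real) \<Rightarrow> bool" where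
  "full_and_null_demand_limits q \<longleftrightarrow>
     (\<exists>pL pH. 0 \<le> pL \<and> 0 < pH \<and> (q \<longlongrightarrow> 1) (at_right pL) \<and> (q \<longlongrightarrow> 0) (at_left pH))"

lemma full_and_null_demand_limits_cong:
  assumes "\<And>p. 0 \<le> p \<Longrightarrow> f p = g p"
  shows "full_and_null_demand_limits f \<longleftrightarrow> full_and_null_demand_limits g"
proof -
  have "(f \<longlongrightarrow> l) (at_right a) \<longleftrightarrow> (g \<longlongrightarrow> l) (at_right a)" if "0 \<le> a" for a l
    by (rule tendsto_cong, use eventually_at_right_less[of a] in eventually_elim)
      (use assms that in auto)
  moreover have "(f \<longlongrightarrow> l) (at_left a) \<longleftrightarrow> (g \<longlongrightarrow> l) (at_left a)" if "0 < a" for a l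
    by (rule tendsto_cong, use eventually_at_left_real[OF that] in eventually_elim)
      (use assms in auto)
  ultimately show ?thesis
    unfolding full_and_null_demand_limits_def by blast
qed

definition atomless_survival_on_nonneg :: "(real \<Rightarrow> real) \<Rightarrow> bool" where
  "atomless_survival_on_nonneg q \<longleftrightarrow>
     (\<exists>M. real_distribution M \<and> (\<forall>p \<ge> 0. measure M {p} = 0 \<and> q p = measure M {p..}))"

lemma QRUM_rationalizable_iff_survival:
  "QRUM_rationalizable q \<longleftrightarrow> atomless_survival_on_nonneg q \<and> full_and_null_demand_limits q"
proof
  assume "QRUM_rationalizable q"
  then obtain H V0 V1 \<beta> where "prob_space H" and sets_H: "sets H = sets borel"
    and measurable: "V0 \<in> borel_measurable borel" "V1 \<in> borel_measurable borel" "\<beta> \<in> borel_measurable borel"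
    and \<beta>_pos: "\<forall>\<eta>. \<beta> \<eta> > 0"
    and q_eq: "\<forall>p \<ge> 0. q p = qrum_prob H V0 V1 \<beta> p"
    and no_ties: "\<forall>p \<ge> 0. measure H {\<eta>. V0 \<eta> = V1 \<eta> - \<beta> \<eta> * p} = 0"
    and limits: "full_and_null_demand_limits (qrum_prob H V0 V1 \<beta>)"
    unfolding QRUM_rationalizable_def full_and_null_demand_limits_def by blast
  define M where "M = distr H borel (willingness_to_pay V0 V1 \<beta>)"
  have "real_distribution M"
    unfolding M_def using \<open>prob_space H\<close>
    by (intro prob_space.real_distribution_distr)
      (simp_all add: measurable_cong_sets[OF sets_H refl] borel_measurable_willingness_to_pay measurable)
  moreover have "\<forall>p \<ge> 0. measure M {p} = 0 \<and> q p = measure M {p..}"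
    using q_eq no_ties
      qrum_prob_eq_distr_willingness_to_pay[OF sets_H measurable \<beta>_pos]
      measure_ties_eq_distr_willingness_to_pay[OF sets_H measurable \<beta>_pos]
    unfolding M_def by simp
  ultimately have "atomless_survival_on_nonneg q"
    unfolding atomless_survival_on_nonneg_def by blast
  moreover have "full_and_null_demand_limits q"
    using full_and_null_demand_limits_cong[of q "qrum_prob H V0 V1 \<beta>"] q_eq limits by simp
  ultimately show "atomless_survival_on_nonneg q \<and> full_and_null_demand_limits q" ..
next
  assume "atomless_survival_on_nonneg q \<and> full_and_null_demand_limits q"
  then obtain M where M: "real_distribution M" and atomless: "\<forall>p \<ge> 0. measure M {p} = 0"
    and q_eq: "\<forall>p \<ge> 0. q p = measure M {p..}" and limits: "full_and_null_demand_limits q"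
    unfolding atomless_survival_on_nonneg_def by blast
  \<comment> \<open>The taste shock itself is the willingness to pay.\<close>
  have choice_set: "{\<eta>. 0 \<le> \<eta> - 1 * p} = {p..}" and tie_set: "{\<eta>. 0 = \<eta> - 1 * p} = {p}" for p :: real
    by auto
  have q_qrum: "q p = qrum_prob M (\<lambda>_. 0) (\<lambda>\<eta>. \<eta>) (\<lambda>_. 1) p" if "p \<ge> 0" for p
    using q_eq that unfolding qrum_prob_def choice_set by simp
  then have "full_and_null_demand_limits (qrum_prob M (\<lambda>_. 0) (\<lambda>\<eta>. \<eta>) (\<lambda>_. 1))"
    using limits full_and_null_demand_limits_cong by blast
  then show "QRUM_rationalizable q"
    unfolding QRUM_rationalizable_def full_and_null_demand_limits_def
    using M atomless q_qrum
    by (intro exI[of _ M] exI[of _ "\<lambda>_. 0"] exI[of _ "\<lambda>\<eta>. \<eta>"] exI[of _ "\<lambda>_. 1"])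
      (auto simp: tie_set real_distribution.events_eq_borel real_distribution.axioms(1))
qed

lemma antitone_tendsto_at_right_le:
  fixes q :: "real \<Rightarrow> real"
  assumes antitone: "\<And>x y. 0 \<le> x \<Longrightarrow> x \<le> y \<Longrightarrow> q y \<le> q x"
    and "(q \<longlongrightarrow> l) (at_right a)" and "0 \<le> x" "x \<le> a"
  shows "l \<le> q x"
  by (rule tendsto_upperbound[OF assms(2)], use eventually_at_right_less[of a] in eventually_elim)
    (use antitone assms(3,4) in auto)

lemma antitone_tendsto_at_left_ge:
  fixes q :: "real \<Rightarrow> real"
  assumes antitone: "\<And>x y. 0 \<le> x \<Longrightarrow> x \<le> y \<Longrightarrow> q y \<le> q x"
    and "(q \<longlongrightarrow> l) (at_left a)" and "0 < a" "a \<le> x"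
  shows "q x \<le> l"
  by (rule tendsto_lowerbound[OF assms(2)], use eventually_at_left_real[OF assms(3)] in eventually_elim)
    (use antitone assms(4) in auto)

lemma survival_distribution_exists:
  fixes q :: "real \<Rightarrow> real"
  assumes antitone: "\<And>x y. 0 \<le> x \<Longrightarrow> x \<le> y \<Longrightarrow> q y \<le> q x"
    and continuous: "continuous_on {0..} q"
    and q_0: "q 0 = 1" and q_vanishes: "\<And>x. pH \<le> x \<Longrightarrow> q x = 0"
  shows "\<exists>M. real_distribution M \<and> (\<forall>p. measure M {p} = 0) \<and> (\<forall>p \<ge> 0. measure M {p..} = q p)"
proof -
  define F where "F x = 1 - q (max x 0)" for x
  have F_mono: "F x \<le> F y" if "x \<le> y" for x y
    unfolding F_def using antitone that by (auto simp: max_def)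
  have F_isCont: "isCont F x" for x
  proof -
    have "continuous_on UNIV (\<lambda>x. q (max x 0))"
      by (rule continuous_on_compose2[OF continuous]) (auto intro: continuous_on_max continuous_on_id)
    then show ?thesis
      unfolding F_def by (intro continuous_intros) (simp add: continuous_on_eq_continuous_at)
  qed
  then have F_right_continuous: "continuous (at_right x) F" for x
    using continuous_at_split by blast
  have F_at_bot: "(F \<longlongrightarrow> 0) at_bot"
    by (rule tendsto_eventually) (auto simp: eventually_at_bot_linorder F_def q_0 intro!: exI[of _ 0])
  have F_at_top: "(F \<longlongrightarrow> 1) at_top"
    by (rule tendsto_eventually)
      (auto simp: eventually_at_top_linorder F_def q_vanishes intro!: exI[of _ "max pH 0"])
  define M where "M = interval_measure F"
  interpret M: real_distribution M
    unfolding M_def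
    by (rule real_distribution_interval_measure[OF F_mono F_right_continuous F_at_bot F_at_top])
  have cdf_M: "cdf M = F"
    unfolding M_def by (rule cdf_interval_measure[OF F_mono F_right_continuous F_at_bot])
  have atomless: "measure M {p} = 0" for p
    using M.isCont_cdf F_isCont cdf_M by simp
  have "measure M {p..} = q p" if "p \<ge> 0" for p
    using M.measure_atLeast[of p] atomless[of p] that by (simp add: cdf_M F_def)
  then show ?thesis
    using M.real_distribution_axioms atomless by blast
qed

lemma survival_function_iff_antitone_continuous:
  fixes q :: "real \<Rightarrow> real"
  assumes range: "\<forall>p \<ge> 0. 0 \<le> q p \<and> q p \<le> 1"
    and limits: "full_and_null_demand_limits q"
  shows "atomless_survival_on_nonneg q \<longleftrightarrow>
         (\<forall>x y. 0 \<le> x \<and> x \<le> y \<longrightarrow> q y \<le> q x) \<and> continuous_on {0..} q"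
proof
  assume "atomless_survival_on_nonneg q"
  then obtain M where "real_distribution M"
    and survival: "\<forall>p \<ge> 0. measure M {p} = 0 \<and> q p = measure M {p..}"
    unfolding atomless_survival_on_nonneg_def by blast
  then interpret real_distribution M by simp
  have "\<forall>x y. 0 \<le> x \<and> x \<le> y \<longrightarrow> q y \<le> q x"
    using survival by (auto intro!: finite_measure_mono)
  moreover have "continuous_on {0..} (\<lambda>p. measure M {p..})"
    using survival by (intro continuous_on_survival) simp
  then have "continuous_on {0..} q"
    by (rule continuous_on_eq) (use survival in simp)
  ultimately show "(\<forall>x y. 0 \<le> x \<and> x \<le> y \<longrightarrow> q y \<le> q x) \<and> continuous_on {0..} q" ..
next
  assume "(\<forall>x y. 0 \<le> x \<and> x \<le> y \<longrightarrow> q y \<le> q x) \<and> continuous_on {0..} q"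
  then have antitone: "\<And>x y. 0 \<le> x \<Longrightarrow> x \<le> y \<Longrightarrow> q y \<le> q x" and "continuous_on {0..} q"
    by blast+
  obtain pL pH where "0 \<le> pL" "0 < pH"
    and full: "(q \<longlongrightarrow> 1) (at_right pL)" and null: "(q \<longlongrightarrow> 0) (at_left pH)"
    using limits unfolding full_and_null_demand_limits_def by blast
  have "q 0 = 1"
    using antitone_tendsto_at_right_le[OF antitone full order_refl \<open>0 \<le> pL\<close>] range[rule_format, of 0] by simp
  moreover have "q x = 0" if "pH \<le> x" for x
    using antitone_tendsto_at_left_ge[OF antitone null \<open>0 < pH\<close> that] range[rule_format, of x] \<open>0 < pH\<close> that
    by simp
  ultimately show "atomless_survival_on_nonneg q"
    unfolding atomless_survival_on_nonneg_def
    using survival_distribution_exists[OF antitone \<open>continuous_on {0..} q\<close>] by metis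
qed

theorem corollary1:
  fixes q1 :: "real \<Rightarrow> real"
  assumes range: "\<forall>p \<ge> 0. 0 \<le> q1 p \<and> q1 p \<le> 1"
  shows "QRUM_rationalizable q1 \<longleftrightarrow>
           ((\<forall>x y. 0 \<le> x \<and> x \<le> y \<longrightarrow> q1 y \<le> q1 x) \<and>
            continuous_on {0..} q1 \<and>
            (\<exists>pL pH. 0 \<le> pL \<and> 0 < pH \<and>
               (q1 \<longlongrightarrow> 1) (at_right pL) \<and> (q1 \<longlongrightarrow> 0) (at_left pH)))"
  unfolding full_and_null_demand_limits_def[symmetric] QRUM_rationalizable_iff_survival
  using survival_function_iff_antitone_continuous[OF range]
  by (cases "full_and_null_demand_limits q1") simp_all

end
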